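(* In $\mathbb{R}^3$ write $z=(z_1,\mathbf z_2)$ with $\mathbf z_2\in\mathbb{R}^2$. For $k\in\mathbb{N}$, $r>0$ let $C_{k,r}=[k,k+\tfrac14]\times D_r$, where $D_r\subset\mathbb{R}^2$ is the disc of radius $r$ centred at $0$. For $r\in(0,e^{-1})$ let $f(r)=\frac{1}{r|\ln r|\ln|\ln r|}$, and for $n\in\mathbb{N}$, $z\in\mathbb{R}^3$ let $V_n(z)=f\big(\tfrac{z_1}{25n}\big)\sum_{k=1}^n\mathbf 1_{C_{k,\sqrt{k/(25n)}}}(z)$ (and $V_n(z)=0$ off the union of these cylinders). Then $$\lim_{\varepsilon\to0^+}\ \sup_{x\in\mathbb{R}^3,\ n\in\mathbb{N}}\int_{|z-x|<\varepsilon}\frac{|V_n(z)|}{|z-x|}\,dz=0.$$ *)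

theory Defs
  imports "HOL-Analysis.Analysis"
begin

text \<open>Points of R^3 are z :: real^3 with z = (z$1, (z$2, z$3)).\<close>

definition fr :: "real \<Rightarrow> real" where
  "fr r = 1 / (r * \<bar>ln r\<bar> * ln \<bar>ln r\<bar>)"

definition cyl :: "nat \<Rightarrow> real \<Rightarrow> (real^3) set" where
  "cyl k r = {z. real k \<le> z$1 \<and> z$1 \<le> real k + 1/4 \<and> (z$2)\<^sup>2 + (z$3)\<^sup>2 \<le> r\<^sup>2}"

definition Vn :: "nat \<Rightarrow> real^3 \<Rightarrow> real" where
  "Vn n z = fr (z$1 / (25 * real n)) *
     (\<Sum>k=1..n. indicator (cyl k (sqrt (real k / (25 * real n)))) z)"

end

theory Submission
  imports Defs "HOL-Real_Asymp.Real_Asymp"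
begin

text \<open>
  A ball of radius \<open>\<epsilon> < 1/5\<close> meets at most one of the cylinders, say \<open>C\<^sub>k\<close>, and there
  \<open>V\<^sub>n \<le> f(s)\<close> with \<open>s = k/(25n)\<close>, since \<open>f\<close> is decreasing. Cutting the ball into dyadic
  shells, the integral of \<open>1/|z - x|\<close> over the part of the ball in the square tube
  \<open>|z\<^sub>2|, |z\<^sub>3| \<le> \<surd>s\<close> is at most \<open>16 \<Sum>\<^sub>j min (\<epsilon>\<^sup>2 4\<^sup>-\<^sup>j) s\<close>.
  If \<open>\<epsilon>\<^sup>2 \<le> s\<close> this sum is \<open>O(\<epsilon>\<^sup>2)\<close> and \<open>f(s) \<le> f(\<epsilon>\<^sup>2)\<close>; if \<open>s < \<epsilon>\<^sup>2\<close>, the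
  interpolation \<open>min A s \<le> A\<^sup>b s\<^sup>1\<^sup>-\<^sup>b\<close> with \<open>b = 1/|ln s|\<close> makes it \<open>O(s |ln s|)\<close>, so the
  product is \<open>O(1 / ln |ln s|) \<le> O(1 / ln |ln \<epsilon>\<^sup>2|)\<close>. Both bounds tend to 0 with \<open>\<epsilon>\<close>,
  uniformly in \<open>x\<close> and \<open>n\<close>.
\<close>

section \<open>The profile \<open>f\<close>\<close>

lemma minus_ln_ge_27_10:
  fixes r :: real
  assumes "0 < r" "r \<le> 1/20"
  shows "27/10 \<le> - ln r"
proof -
  have "9/10 \<le> exp (-1/10::real)"
    using exp_ge_add_one_self[of "-1/10::real"] by simp
  hence "exp (1/10::real) \<le> 10/9"
    by (simp add: exp_minus field_simps)
  hence "exp (1/10::real) ^ 27 \<le> (10/9) ^ 27"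
    by (rule power_mono) simp
  also have "exp (1/10::real) ^ 27 = exp (27/10)"
    by (subst exp_of_nat_mult[symmetric]) simp
  finally have "27/10 \<le> ln (20::real)"
    by (subst ln_ge_iff) (auto simp: power_divide)
  also have "ln 20 \<le> ln (1/r)"
    using assms by (subst ln_le_cancel_iff) (auto simp: field_simps)
  finally show ?thesis
    using assms by (simp add: ln_div)
qed

lemma one_le_minus_one_mult_ln:
  fixes L :: real
  assumes "27/10 \<le> L"
  shows "1 \<le> (L - 1) * ln L"
proof -
  have "ln (1/L) \<le> 1/L - 1"
    using assms by (intro ln_le_minus_one) auto
  hence "1 - 1/L \<le> ln L"
    using assms by (simp add: ln_div)
  hence "(L - 1) * (1 - 1/L) \<le> (L - 1) * ln L"
    using assms by (intro mult_left_mono) auto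
  moreover have "(L - 1)\<^sup>2 - L = (L - 27/10) * (L - 3/10) + 19/100"
    by (simp add: power2_eq_square field_simps)
  hence "L \<le> (L - 1)\<^sup>2"
    using assms mult_nonneg_nonneg[of "L - 27/10" "L - 3/10"] by linarith
  hence "1 \<le> (L - 1) * (1 - 1/L)"
    using assms by (simp add: field_simps power2_eq_square)
  ultimately show ?thesis
    by linarith
qed

lemma fr_eq:
  "0 < r \<Longrightarrow> r < 1 \<Longrightarrow> fr r = 1 / (r * (- ln r) * ln (- ln r))"
  unfolding fr_def by (simp add: abs_if)

lemma x_ln_ln_pos:
  fixes r :: real
  assumes "0 < r" "r \<le> 1/20"
  shows "0 < r * (- ln r) * ln (- ln r)"
  using assms minus_ln_ge_27_10[OF assms] by (intro mult_pos_pos ln_gt_zero) auto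

lemma x_ln_ln_mono:
  fixes r t :: real
  assumes "0 < r" "r \<le> t" "t \<le> 1/20"
  shows "r * (- ln r) * ln (- ln r) \<le> t * (- ln t) * ln (- ln t)"
proof (rule DERIV_nonneg_imp_nondecreasing[OF assms(2)])
  fix x
  assume "r \<le> x" "x \<le> t"
  hence x: "0 < x" "x \<le> 1/20"
    using assms by auto
  have L: "27/10 \<le> - ln x"
    using minus_ln_ge_27_10[OF x] .
  have "DERIV (\<lambda>x. x * (- ln x) * ln (- ln x)) x :> (- ln x - 1) * ln (- ln x) - 1"
    using x L by (auto intro!: derivative_eq_intros simp: field_simps)
  moreover have "0 \<le> (- ln x - 1) * ln (- ln x) - 1"
    using one_le_minus_one_mult_ln[OF L] by simp
  ultimately show "\<exists>y. DERIV (\<lambda>x. x * (- ln x) * ln (- ln x)) x :> y \<and> 0 \<le> y"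
    by blast
qed

lemma fr_pos: "0 < r \<Longrightarrow> r \<le> 1/20 \<Longrightarrow> 0 < fr r"
  using x_ln_ln_pos[of r] by (simp add: fr_eq)

lemma fr_antitone:
  assumes "0 < r" "r \<le> t" "t \<le> 1/20"
  shows "fr t \<le> fr r"
proof -
  have "1 / (t * (- ln t) * ln (- ln t)) \<le> 1 / (r * (- ln r) * ln (- ln r))"
    using x_ln_ln_mono[OF assms] mult_pos_pos[OF x_ln_ln_pos[of t] x_ln_ln_pos[of r]] assms
    by (intro divide_left_mono) auto
  thus ?thesis
    using assms by (simp add: fr_eq)
qed

section \<open>Sums of truncated geometric sequences\<close>

lemma min_le_powr_mult_powr:
  fixes A s b :: real
  assumes "0 < A" "0 < s" "0 \<le> b" "b \<le> 1"
  shows "min A s \<le> A powr b * s powr (1 - b)"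
proof (cases "A \<le> s")
  case True
  have "A = A powr b * A powr (1 - b)"
    using assms by (simp add: powr_add[symmetric])
  also have "\<dots> \<le> A powr b * s powr (1 - b)"
    using True assms by (intro mult_left_mono powr_mono2) auto
  finally show ?thesis
    using True by simp
next
  case False
  have "s = s powr b * s powr (1 - b)"
    using assms by (simp add: powr_add[symmetric])
  also have "\<dots> \<le> A powr b * s powr (1 - b)"
    using False assms by (intro mult_right_mono powr_mono2) auto
  finally show ?thesis
    using False by simp
qed

lemma
  fixes E s q b :: real
  assumes "0 < E" "0 < s" "0 < q" "q < 1" "0 < b" "b \<le> 1"
  shows summable_min_geometric: "summable (\<lambda>j. min (E * q^j) s)"
    and suminf_min_geometric_le:
      "(\<Sum>j. min (E * q^j) s) \<le> E powr b * s powr (1 - b) / (1 - q powr b)"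
proof -
  have qb: "0 < q powr b" "q powr b < 1"
    using assms powr_less_mono2[of b q 1] by auto
  have term_le: "min (E * q^j) s \<le> E powr b * s powr (1 - b) * (q powr b)^j" for j
    using min_le_powr_mult_powr[of "E * q^j" s b] assms
    by (simp add: powr_mult powr_realpow[symmetric] powr_powr mult_ac)
  have geometric: "summable (\<lambda>j. E powr b * s powr (1 - b) * (q powr b)^j)"
    using qb by (intro summable_mult summable_geometric) auto
  show summable: "summable (\<lambda>j. min (E * q^j) s)"
    by (rule summable_comparison_test[OF _ geometric])
      (use term_le assms in \<open>auto intro!: exI[of _ 0]\<close>)
  have "(\<Sum>j. min (E * q^j) s) \<le> (\<Sum>j. E powr b * s powr (1 - b) * (q powr b)^j)"
    by (rule suminf_le[OF term_le summable geometric])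
  also have "\<dots> = E powr b * s powr (1 - b) / (1 - q powr b)"
    using qb by (subst suminf_mult) (auto simp: suminf_geometric)
  finally show "(\<Sum>j. min (E * q^j) s) \<le> E powr b * s powr (1 - b) / (1 - q powr b)" .
qed

lemma half_le_one_minus_exp_neg:
  fixes y :: real
  assumes "0 < y" "y \<le> 1"
  shows "y / 2 \<le> 1 - exp (- y)"
proof -
  have "exp (- y) \<le> 1 / (1 + y)"
    using exp_ge_add_one_self[of y] assms by (simp add: exp_minus field_simps)
  moreover have "y / 2 \<le> 1 - 1 / (1 + y)"
    using assms by (simp add: field_simps)
  ultimately show ?thesis
    by linarith
qed

text \<open>The interpolation exponent \<open>b = 1/|ln s|\<close> makes \<open>s\<^sup>1\<^sup>-\<^sup>b = e s\<close>.\<close>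

lemma suminf_min_quarter_le_log:
  fixes E s :: real
  assumes E: "0 < E" "E \<le> 1" and s: "0 < s" "2 \<le> - ln s"
  shows "(\<Sum>j. min (E * (1/4)^j) s) \<le> 6 * s * (- ln s)"
proof -
  define L where "L = - ln s"
  define b where "b = 1 / L"
  have L: "2 \<le> L"
    using s L_def by simp
  have b: "0 < b" "b \<le> 1/2"
    using L unfolding b_def by auto
  have ln4: "1 \<le> ln (4::real)" "ln (4::real) \<le> 2"
    using exp_le ln_le_minus_one[of "2::real"] ln_realpow[of "2::real" 2]
    by (subst ln_ge_iff, simp_all)
  have y: "0 < b * ln 4" "b * ln 4 \<le> 1"
    using ln4 b mult_mono[of b "1/2" "ln 4" 2] by auto
  have "(\<Sum>j. min (E * (1/4)^j) s) \<le> E powr b * s powr (1 - b) / (1 - (1/4) powr b)"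
    using suminf_min_geometric_le[of E s "1/4" b] E s b by simp
  also have "\<dots> \<le> 1 * (3 * s) / (b * ln 4 / 2)"
  proof (intro frac_le mult_mono)
    show "E powr b \<le> 1"
      using E b by (intro powr_le1) auto
    have "s powr (1 - b) = s * exp 1"
      using s L unfolding powr_def b_def L_def by (auto simp: algebra_simps exp_add)
    thus "s powr (1 - b) \<le> 3 * s"
      using exp_le s by simp
    have "(1/4::real) powr b = exp (- (b * ln 4))"
      by (simp add: powr_def ln_div)
    thus "b * ln 4 / 2 \<le> 1 - (1/4) powr b"
      using half_le_one_minus_exp_neg[OF y] by simp
  qed (use s y in auto)
  also have "\<dots> = 6 * s * L / ln 4"
    using L unfolding b_def by (simp add: field_simps)
  also have "\<dots> \<le> 6 * s * L"
    using divide_left_mono[of 1 "ln 4" "6 * s * L"] ln4 s L by simp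
  finally show ?thesis
    unfolding L_def .
qed

lemma fr_mult_suminf_min_le:
  fixes E s :: real
  assumes E: "0 < E" "E \<le> 1/20" and s: "0 < s" "s \<le> 1/20"
  shows "fr s * (\<Sum>j. min (E * (1/4)^j) s) \<le> 4/3 * E * fr E + 6 / ln (- ln E)"
proof -
  have LE: "27/10 \<le> - ln E" and Ls: "27/10 \<le> - ln s"
    using minus_ln_ge_27_10 E s by auto
  have lnLE: "0 < ln (- ln E)"
    using LE by (intro ln_gt_zero) auto
  have frE: "0 < fr E" and frs: "0 < fr s"
    using fr_pos E s by auto
  show ?thesis
  proof (cases "E \<le> s")
    case True
    have "(\<Sum>j. min (E * (1/4)^j) s) \<le> 4/3 * E"
      using suminf_min_geometric_le[of E s "1/4" 1] E s by simp
    moreover have "0 \<le> (\<Sum>j. min (E * (1/4)^j) s)"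
      using E s by (intro suminf_nonneg summable_min_geometric[of _ _ "1/4"]) auto
    moreover have "fr s \<le> fr E"
      using fr_antitone True E s by simp
    ultimately have "fr s * (\<Sum>j. min (E * (1/4)^j) s) \<le> fr E * (4/3 * E)"
      using frs by (intro mult_mono) auto
    moreover have "fr E * (4/3 * E) = 4/3 * E * fr E"
      by simp
    moreover have "0 \<le> 6 / ln (- ln E)"
      using lnLE by simp
    ultimately show ?thesis
      by linarith
  next
    case False
    define L where "L = - ln s"
    have L: "27/10 \<le> L"
      using Ls L_def by simp
    have lnL: "0 < ln L"
      using L by (intro ln_gt_zero) auto
    have "fr s * (\<Sum>j. min (E * (1/4)^j) s) \<le> fr s * (6 * s * L)"
      using suminf_min_quarter_le_log[of E s] E s L frs unfolding L_def
      by (intro mult_left_mono) auto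
    also have "\<dots> = 6 / ln L"
      using fr_eq[of s] s L lnL unfolding L_def by (simp add: field_simps)
    also have "\<dots> \<le> 6 / ln (- ln E)"
    proof -
      have "- ln E \<le> L"
        using False s E unfolding L_def by simp
      hence "ln (- ln E) \<le> ln L"
        using LE by (subst ln_le_cancel_iff) auto
      thus ?thesis
        using lnLE by (intro divide_left_mono) auto
    qed
    finally show ?thesis
      using frE E by (simp add: add_increasing)
  qed
qed

section \<open>Integrals of the Newtonian kernel over a tube\<close>

lemma indicator_div_dist_le_dyadic:
  fixes x z :: "'a::metric_space" and e :: real
  assumes e: "0 < e"
  shows "ennreal (indicator C z / dist z x) * indicator (ball x e) z
    \<le> (\<Sum>j. ennreal (2^Suc j / e) * indicator (C \<inter> ball x (e / 2^j)) z)"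
proof (cases "z \<in> C \<and> z \<in> ball x e \<and> z \<noteq> x")
  case False
  thus ?thesis
    by (auto simp: indicator_def)
next
  case True
  define d where "d = dist z x"
  have d: "0 < d" "d < e"
    using True unfolding d_def by (auto simp: dist_commute)
  obtain p0 where "e / d < 2^p0"
    using real_arch_pow[of 2 "e/d"] by auto
  hence ex: "\<exists>p. e / 2^p \<le> d"
    using d by (intro exI[of _ p0]) (simp add: field_simps)
  txt \<open>\<open>z\<close> lies in the shell \<open>e/2\<^sup>m\<^sup>+\<^sup>1 \<le> d < e/2\<^sup>m\<close>, where \<open>1/d \<le> 2\<^sup>m\<^sup>+\<^sup>1/e\<close>.\<close>
  define p where "p = (LEAST p. e / 2^p \<le> d)"
  have p: "e / 2^p \<le> d"
    unfolding p_def by (rule LeastI_ex[OF ex])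
  then obtain m where m: "p = Suc m"
    using d by (cases p) auto
  have "\<not> e / 2^m \<le> d"
    using not_less_Least[of m "\<lambda>p. e / 2^p \<le> d"] m unfolding p_def by simp
  hence "z \<in> C \<inter> ball x (e / 2^m)"
    using True unfolding d_def by (simp add: dist_commute)
  moreover have "1 / d \<le> 2^Suc m / e"
    using p d e unfolding m by (simp add: field_simps)
  ultimately have "ennreal (indicator C z / dist z x) * indicator (ball x e) z
      \<le> ennreal (2^Suc m / e) * indicator (C \<inter> ball x (e / 2^m)) z"
    using True unfolding d_def by (simp add: indicator_def ennreal_leI)
  also have "\<dots> \<le> (\<Sum>j. ennreal (2^Suc j / e) * indicator (C \<inter> ball x (e / 2^j)) z)"
  proof -
    have le_suminf: "g m \<le> suminf g" for g :: "nat \<Rightarrow> ennreal"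
      using sum_le_suminf[of g "{m}"] by simp
    show ?thesis
      by (rule le_suminf)
  qed
  finally show ?thesis .
qed

lemma nn_integral_indicator_div_dist_le:
  fixes x :: "'a::euclidean_space" and e :: real
  assumes C: "C \<in> sets lborel" and e: "0 < e"
  shows "(\<integral>\<^sup>+z. ennreal (indicator C z / dist z x) * indicator (ball x e) z \<partial>lborel)
    \<le> (\<Sum>j. ennreal (2^Suc j / e) * emeasure lborel (C \<inter> ball x (e / 2^j)))"
proof -
  have sets: "C \<inter> ball x r \<in> sets lborel" for r
    using C by (simp add: borel_open)
  have "(\<integral>\<^sup>+z. ennreal (indicator C z / dist z x) * indicator (ball x e) z \<partial>lborel)
     \<le> (\<integral>\<^sup>+z. (\<Sum>j. ennreal (2^Suc j / e) * indicator (C \<inter> ball x (e / 2^j)) z) \<partial>lborel)"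
    by (intro nn_integral_mono indicator_div_dist_le_dyadic e)
  also have "\<dots> = (\<Sum>j. \<integral>\<^sup>+z. ennreal (2^Suc j / e) * indicator (C \<inter> ball x (e / 2^j)) z \<partial>lborel)"
    by (intro nn_integral_suminf borel_measurable_times_ennreal borel_measurable_const
        borel_measurable_indicator sets)
  also have "\<dots> = (\<Sum>j. ennreal (2^Suc j / e) * emeasure lborel (C \<inter> ball x (e / 2^j)))"
    using sets by (intro suminf_cong nn_integral_cmult_indicator)
  finally show ?thesis .
qed

definition tube :: "real \<Rightarrow> (real^3) set" where
  "tube a = {z. \<bar>z$2\<bar> \<le> a \<and> \<bar>z$3\<bar> \<le> a}"

lemma tube_sets[measurable]: "tube a \<in> sets lborel"
  unfolding tube_def by measurable

lemma emeasure_cbox_cart3: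
  fixes l u :: "real^3"
  assumes "\<And>i. l$i \<le> u$i"
  shows "emeasure lborel (cbox l u) = ennreal ((u$1 - l$1) * (u$2 - l$2) * (u$3 - l$3))"
proof -
  have "cbox l u \<noteq> {}"
    using assms by (auto simp: box_ne_empty(1) cart_eq_inner_axis Basis_vec_def)
  hence "measure lborel (cbox l u) = (u$1 - l$1) * (u$2 - l$2) * (u$3 - l$3)"
    unfolding content_cbox_cart[OF \<open>cbox l u \<noteq> {}\<close>] UNIV_3 by (simp add: mult_ac)
  moreover have "emeasure lborel (cbox l u) = ennreal (measure lborel (cbox l u))"
    using emeasure_lborel_cbox_finite[of l u] by (intro emeasure_eq_ennreal_measure) auto
  ultimately show ?thesis
    by simp
qed

text \<open>In the transversal coordinates the box is centred at \<open>x\<close> if \<open>r \<le> a\<close> and at the axis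
  otherwise, so that its half-width is \<open>min r a\<close> in both cases.\<close>

lemma emeasure_tube_Int_ball_le:
  fixes x :: "real^3" and r a :: real
  assumes r: "0 < r" and a: "0 \<le> a"
  shows "emeasure lborel (tube a \<inter> ball x r) \<le> ennreal (8 * r * min (r^2) (a^2))"
proof -
  define m where "m = min r a"
  define c where "c i = (if r \<le> a then x$i else 0)" for i
  define l :: "real^3" where "l = vector [x$1 - r, c 2 - m, c 3 - m]"
  define u :: "real^3" where "u = vector [x$1 + r, c 2 + m, c 3 + m]"
  have lu: "l$i \<le> u$i" for i
    using r a exhaust_3[of i] unfolding l_def u_def m_def by auto
  have "tube a \<inter> ball x r \<subseteq> cbox l u"
  proof
    fix z
    assume z: "z \<in> tube a \<inter> ball x r"
    have near: "\<bar>z$i - x$i\<bar> < r" for i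
      using component_le_norm_cart[of "z - x" i] z by (simp add: dist_norm norm_minus_commute)
    have "\<bar>z$2\<bar> \<le> a" "\<bar>z$3\<bar> \<le> a"
      using z unfolding tube_def by auto
    hence "\<bar>z$1 - x$1\<bar> < r" "\<bar>z$2 - c 2\<bar> \<le> m" "\<bar>z$3 - c 3\<bar> \<le> m"
      using near[of 1] near[of 2] near[of 3] unfolding c_def m_def by auto
    thus "z \<in> cbox l u"
      unfolding mem_box_cart l_def u_def
      by (auto simp: forall_3 abs_le_iff abs_less_iff)
  qed
  hence "emeasure lborel (tube a \<inter> ball x r) \<le> emeasure lborel (cbox l u)"
    by (intro emeasure_mono) auto
  also have "\<dots> = ennreal (8 * r * m^2)"
    using lu by (simp add: emeasure_cbox_cart3 l_def u_def power2_eq_square mult_ac)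
  also have "m^2 = min (r^2) (a^2)"
    using r a unfolding m_def by (auto simp: min_def power_mono)
  finally show ?thesis .
qed

lemma nn_integral_tube_div_dist_le:
  fixes x :: "real^3" and e a :: real
  assumes e: "0 < e" and a: "0 < a"
  shows "(\<integral>\<^sup>+z. ennreal (indicator (tube a) z / dist z x) * indicator (ball x e) z \<partial>lborel)
    \<le> ennreal (16 * (\<Sum>j. min (e^2 * (1/4)^j) (a^2)))"
proof -
  have summable: "summable (\<lambda>j. min (e^2 * (1/4)^j) (a^2))"
    using e a summable_min_geometric[of "e^2" "a^2" "1/4" 1] by simp
  have shell: "ennreal (2^Suc j / e) * ennreal (8 * (e / 2^j) * min ((e / 2^j)^2) (a^2))
      = ennreal (16 * min (e^2 * (1/4)^j) (a^2))" for j :: nat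
  proof -
    have "(e / 2^j)^2 = e^2 * (1/4)^j"
      by (simp add: power_divide power_one_over power_mult_distrib[symmetric] power2_eq_square)
    hence "(2::real)^Suc j / e * (8 * (e / 2^j) * min ((e / 2^j)^2) (a^2))
        = 16 * min (e^2 * (1/4)^j) (a^2)"
      using e by (simp add: field_simps)
    thus ?thesis
      using e by (simp add: ennreal_mult'[symmetric])
  qed
  have "(\<integral>\<^sup>+z. ennreal (indicator (tube a) z / dist z x) * indicator (ball x e) z \<partial>lborel)
      \<le> (\<Sum>j. ennreal (2^Suc j / e) * emeasure lborel (tube a \<inter> ball x (e / 2^j)))"
    using tube_sets by (intro nn_integral_indicator_div_dist_le e) simp
  also have "\<dots> \<le> (\<Sum>j. ennreal (2^Suc j / e) * ennreal (8 * (e / 2^j) * min ((e / 2^j)^2) (a^2)))"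
    using e a by (intro suminf_le mult_left_mono emeasure_tube_Int_ball_le) auto
  also have "\<dots> = (\<Sum>j. ennreal (16 * min (e^2 * (1/4)^j) (a^2)))"
    by (simp only: shell)
  also have "\<dots> = ennreal (16 * (\<Sum>j. min (e^2 * (1/4)^j) (a^2)))"
    using summable e a by (subst suminf_ennreal2) (auto intro: summable_mult simp: suminf_mult)
  finally show ?thesis .
qed

section \<open>The potentials \<open>V\<^sub>n\<close>\<close>

lemma cyl_subset_tube:
  assumes "0 \<le> r"
  shows "cyl k r \<subseteq> tube r"
proof
  fix z
  assume "z \<in> cyl k r"
  hence "(z$2)\<^sup>2 + (z$3)\<^sup>2 \<le> r\<^sup>2"
    unfolding cyl_def by simp
  hence "(z$2)\<^sup>2 \<le> r\<^sup>2" "(z$3)\<^sup>2 \<le> r\<^sup>2"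
    using zero_le_power2[of "z$2"] zero_le_power2[of "z$3"] by linarith+
  hence "\<bar>z$2\<bar>\<^sup>2 \<le> r\<^sup>2" "\<bar>z$3\<bar>\<^sup>2 \<le> r\<^sup>2"
    by (simp_all only: power2_abs)
  thus "z \<in> tube r"
    unfolding tube_def using assms power2_le_imp_le by blast
qed

lemma cyl_index_unique:
  assumes "z \<in> cyl j r" "w \<in> cyl k r'" "\<bar>z$1 - w$1\<bar> < 1/2"
  shows "j = k"
proof (rule ccontr)
  assume "j \<noteq> k"
  hence "real j + 1 \<le> real k \<or> real k + 1 \<le> real j"
    by linarith
  thus False
    using assms unfolding cyl_def by auto
qed

lemma Vn_eq_indicator_Union:
  "Vn n z = fr (z$1 / (25 * real n)) *
     indicator (\<Union>k\<in>{1..n}. cyl k (sqrt (real k / (25 * real n)))) z"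
proof -
  have "disjoint_family_on (\<lambda>k. cyl k (sqrt (real k / (25 * real n)))) {1..n}"
    unfolding disjoint_family_on_def using cyl_index_unique by fastforce
  thus ?thesis
    unfolding Vn_def by (subst indicator_UN_disjoint) auto
qed

text \<open>A ball of radius at most \<open>1/4\<close> meeting the \<open>k\<close>-th cylinder meets no other one.\<close>

lemma abs_Vn_le_on_ball:
  fixes x w z :: "real^3" and k n :: nat
  defines "s \<equiv> real k / (25 * real n)"
  assumes e: "e \<le> 1/4" and k: "k \<in> {1..n}"
    and w: "w \<in> ball x e" "w \<in> cyl k (sqrt s)" and z: "z \<in> ball x e"
  shows "\<bar>Vn n z\<bar> \<le> fr s * indicator (tube (sqrt s)) z"
proof -
  have s: "0 < s" "s \<le> 1/20"
    using k unfolding s_def by (auto simp: field_simps)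
  have "\<bar>z$1 - w$1\<bar> \<le> dist z w"
    using component_le_norm_cart[of "z - w" 1] by (simp add: dist_norm)
  also have "\<dots> \<le> dist z x + dist w x"
    by (rule dist_triangle2)
  also have "\<dots> < 1/2"
    using w z e by (simp add: dist_commute)
  finally have "\<bar>z$1 - w$1\<bar> < 1/2" .
  hence same_cyl: "z \<in> cyl i (sqrt (real i / (25 * real n))) \<Longrightarrow> i = k" for i
    using w(2) cyl_index_unique by blast
  show ?thesis
  proof (cases "z \<in> cyl k (sqrt s)")
    case True
    have "real k \<le> z$1" "z$1 \<le> real k + 1/4" "k \<le> n"
      using True k unfolding cyl_def by auto
    hence "s \<le> z$1 / (25 * real n)" "z$1 / (25 * real n) \<le> 1/20"
      using k unfolding s_def by (auto simp: field_simps)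
    hence "0 < fr (z$1 / (25 * real n))" "fr (z$1 / (25 * real n)) \<le> fr s"
      using s by (auto intro: fr_pos fr_antitone)
    moreover have "z \<in> tube (sqrt s)"
      using True cyl_subset_tube[of "sqrt s" k] s by auto
    moreover have "z \<in> (\<Union>i\<in>{1..n}. cyl i (sqrt (real i / (25 * real n))))"
      using True k unfolding s_def by blast
    ultimately show ?thesis
      unfolding Vn_eq_indicator_Union s_def by simp
  next
    case False
    hence "z \<notin> (\<Union>i\<in>{1..n}. cyl i (sqrt (real i / (25 * real n))))"
      using same_cyl unfolding s_def by blast
    hence "Vn n z = 0"
      unfolding Vn_eq_indicator_Union by simp
    thus ?thesis
      using fr_pos[OF s] by simp
  qed
qed

lemma set_nn_integral_div_dist_le_indicator:
  fixes V :: "'a::euclidean_space \<Rightarrow> real" and x :: 'a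
  assumes T: "T \<in> sets lborel" and c: "0 \<le> c"
    and V: "\<And>z. z \<in> ball x e \<Longrightarrow> \<bar>V z\<bar> \<le> c * indicator T z"
  shows "set_nn_integral lborel (ball x e) (\<lambda>z. ennreal (\<bar>V z\<bar> / dist z x))
    \<le> ennreal c * (\<integral>\<^sup>+z. ennreal (indicator T z / dist z x) * indicator (ball x e) z \<partial>lborel)"
proof -
  have "set_nn_integral lborel (ball x e) (\<lambda>z. ennreal (\<bar>V z\<bar> / dist z x))
      \<le> (\<integral>\<^sup>+z. ennreal c * (ennreal (indicator T z / dist z x) * indicator (ball x e) z) \<partial>lborel)"
  proof (intro nn_integral_mono)
    fix z
    have "z \<in> ball x e \<Longrightarrow> \<bar>V z\<bar> / dist z x \<le> c * (indicator T z / dist z x)"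
      using V by (simp add: divide_right_mono)
    thus "ennreal (\<bar>V z\<bar> / dist z x) * indicator (ball x e) z
        \<le> ennreal c * (ennreal (indicator T z / dist z x) * indicator (ball x e) z)"
      using c by (auto simp: indicator_def ennreal_mult[symmetric] intro: ennreal_leI)
  qed
  also have "\<dots> = ennreal c * (\<integral>\<^sup>+z. ennreal (indicator T z / dist z x) * indicator (ball x e) z \<partial>lborel)"
  proof (rule nn_integral_cmult)
    show "(\<lambda>z. ennreal (indicator T z / dist z x) * indicator (ball x e) z) \<in> borel_measurable lborel"
      using T by measurable (simp add: borel_open)
  qed
  finally show ?thesis .
qed

lemma set_nn_integral_Vn_le:
  fixes x :: "real^3" and e :: real and n :: nat
  assumes e: "0 < e" "e < 1/5"
  shows "set_nn_integral lborel (ball x e) (\<lambda>z. ennreal (\<bar>Vn n z\<bar> / dist z x))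
     \<le> ennreal (16 * (4/3 * e^2 * fr (e^2) + 6 / ln (- ln (e^2))))"
proof (cases "\<exists>k\<in>{1..n}. \<exists>w\<in>ball x e. w \<in> cyl k (sqrt (real k / (25 * real n)))")
  case True
  then obtain k w where k: "k \<in> {1..n}"
    and w: "w \<in> ball x e" "w \<in> cyl k (sqrt (real k / (25 * real n)))"
    by blast
  define s where "s = real k / (25 * real n)"
  have s: "0 < s" "s \<le> 1/20"
    using k unfolding s_def by (auto simp: field_simps)
  have E: "0 < e^2" "e^2 \<le> 1/20"
    using e power_strict_mono[of e "1/5" 2] by (auto simp: power_divide)
  have sum_nonneg: "0 \<le> (\<Sum>j. min (e^2 * (1/4)^j) s)"
    using E s by (intro suminf_nonneg summable_min_geometric[of _ _ "1/4"]) auto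
  have "set_nn_integral lborel (ball x e) (\<lambda>z. ennreal (\<bar>Vn n z\<bar> / dist z x))
      \<le> ennreal (fr s) *
        (\<integral>\<^sup>+z. ennreal (indicator (tube (sqrt s)) z / dist z x) * indicator (ball x e) z \<partial>lborel)"
    using abs_Vn_le_on_ball[OF _ k w] fr_pos[OF s] tube_sets e unfolding s_def
    by (intro set_nn_integral_div_dist_le_indicator) auto
  also have "\<dots> \<le> ennreal (fr s) * ennreal (16 * (\<Sum>j. min (e^2 * (1/4)^j) s))"
    using nn_integral_tube_div_dist_le[of e "sqrt s" x] e s by (intro mult_left_mono) auto
  also have "\<dots> = ennreal (16 * (fr s * (\<Sum>j. min (e^2 * (1/4)^j) s)))"
    using fr_pos[OF s] sum_nonneg by (simp add: ennreal_mult[symmetric] mult_ac)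
  also have "\<dots> \<le> ennreal (16 * (4/3 * e^2 * fr (e^2) + 6 / ln (- ln (e^2))))"
    using fr_mult_suminf_min_le[OF E s] by (intro ennreal_leI) simp
  finally show ?thesis .
next
  case False
  hence "set_nn_integral lborel (ball x e) (\<lambda>z. ennreal (\<bar>Vn n z\<bar> / dist z x))
      = (\<integral>\<^sup>+z. 0 \<partial>(lborel :: (real^3) measure))"
    by (intro nn_integral_cong) (auto simp: Vn_eq_indicator_Union indicator_def)
  thus ?thesis
    by simp
qed

theorem corollary4p2:
  shows "((\<lambda>\<epsilon>::real. SUP x::real^3. SUP n::nat.
            set_nn_integral lborel (ball x \<epsilon>) (\<lambda>z. ennreal (\<bar>Vn n z\<bar> / dist z x)))
          \<longlongrightarrow> 0) (at_right 0)"
proof (rule tendsto_sandwich[OF _ _ tendsto_const])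
  let ?bound = "\<lambda>e::real. ennreal (16 * (4/3 * e^2 * fr (e^2) + 6 / ln (- ln (e^2))))"
  show "\<forall>\<^sub>F e in at_right 0. 0 \<le> (SUP x::real^3. SUP n::nat.
      set_nn_integral lborel (ball x e) (\<lambda>z. ennreal (\<bar>Vn n z\<bar> / dist z x)))"
    by simp
  show "\<forall>\<^sub>F e in at_right 0. (SUP x::real^3. SUP n::nat.
      set_nn_integral lborel (ball x e) (\<lambda>z. ennreal (\<bar>Vn n z\<bar> / dist z x))) \<le> ?bound e"
    unfolding eventually_at_right_field
    by (intro exI[of _ "1/5"] conjI allI impI SUP_least set_nn_integral_Vn_le) auto
  have "((\<lambda>e::real. 16 * (4/3 * e^2 * fr (e^2) + 6 / ln (- ln (e^2)))) \<longlongrightarrow> 0) (at_right 0)"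
    unfolding fr_def by real_asymp
  thus "(?bound \<longlongrightarrow> 0) (at_right 0)"
    using tendsto_ennrealI by fastforce
qed

end
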